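(* Let $s,t,q,N$ be integers with $0\le s<q$, $1\le t<q$, $N\ge0$, $t\nmid q$ and $\gcd(t,q)=1$. Write $q=\overline qt+\widehat q$ ($1\le\widehat q<t$), $s=\overline st+\widehat s$ ($0\le\widehat s<t$). Let $S^+(s,t,q,N)=\sum_{k=0}^N\lfloor(s+kt)/q\rfloor$, $M=\lfloor(s+Nt)/q\rfloor$, $x_M=(Mq-s)/t$ and $S=\overline q\frac{(M-1)M}2+M(N-\lceil x_M\rceil+1)$. Let $H=\{k\in\mathbb N:(\widehat s-k\widehat q)\bmod t<\widehat q\}$ (the hS-type indices), $J=H\cap\{0,\dots,t-1\}=\{j_0<j_1<\dots<j_{\widehat q-1}\}$, and for a finite set $K$ let $S_K=\sum_{k\in K}k$. Then: (a) if $j_0\ge M$, $S^+(s,t,q,N)=S$; (b.1) if $j_0<M\le j_{\widehat q-1}$, then $S^+(s,t,q,N)=S+S_K$ with $K=H\cap\{0,\dots,M-1\}$; (b.2) if $j_{\widehat q-1}<M$ and $j_0+t\ge M$, then $S^+(s,t,q,N)=S+S_J$; (b.3) if $j_{\widehat q-1}<M$ and $j_0+t<M$, set $u=\lfloor(M-1)/t\rfloor$ and $K=H\cap\{ut,\dots,M-1\}$; then $S^+(s,t,q,N)=S+uS_J+\widehat q\,t\frac{(u-1)u}2+S_K$.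
   Context: Here $r\bmod t$ denotes the representative of $r$ in $\{0,\dots,t-1\}$. *)

theory Defs
  imports Complex_Main
begin

definition qbar :: "int \<Rightarrow> int \<Rightarrow> int" where "qbar t q = q div t"
definition qhat :: "int \<Rightarrow> int \<Rightarrow> int" where "qhat t q = q mod t"
definition shat :: "int \<Rightarrow> int \<Rightarrow> int" where "shat s t = s mod t"

definition Splus :: "int \<Rightarrow> int \<Rightarrow> int \<Rightarrow> int \<Rightarrow> int" where
  "Splus s t q N = (\<Sum>k\<in>{0..N}. \<lfloor>real_of_int (s + k * t) / real_of_int q\<rfloor>)"

definition Mval :: "int \<Rightarrow> int \<Rightarrow> int \<Rightarrow> int \<Rightarrow> int" where
  "Mval s t q N = \<lfloor>real_of_int (s + N * t) / real_of_int q\<rfloor>"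

definition xM :: "int \<Rightarrow> int \<Rightarrow> int \<Rightarrow> int \<Rightarrow> real" where
  "xM s t q N = real_of_int (Mval s t q N * q - s) / real_of_int t"

definition Sbase :: "int \<Rightarrow> int \<Rightarrow> int \<Rightarrow> int \<Rightarrow> real" where
  "Sbase s t q N = (let M = Mval s t q N in
     real_of_int (qbar t q) * (real_of_int ((M - 1) * M) / 2)
     + real_of_int (M * (N - \<lceil>xM s t q N\<rceil> + 1)))"

definition Hset :: "int \<Rightarrow> int \<Rightarrow> int \<Rightarrow> int set" where
  "Hset s t q = {k. 0 \<le> k \<and> (shat s t - k * qhat t q) mod t < qhat t q}"

definition Jset :: "int \<Rightarrow> int \<Rightarrow> int \<Rightarrow> int set" where
  "Jset s t q = Hset s t q \<inter> {0..t-1}"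

end

theory Submission
  imports Defs
begin

text \<open>The summand \<open>\<lfloor>(s + k t) / q\<rfloor>\<close> counts the \<open>m \<ge> 1\<close> with \<open>m q \<le> s + k t\<close>, so \<open>Splus\<close> is
  governed by the thresholds \<open>\<lceil>(m q - s) / t\<rceil>\<close>, the least \<open>k\<close> reaching \<open>m q\<close>. Writing
  \<open>q = qbar t q * t + qhat t q\<close>, consecutive thresholds differ by \<open>qbar t q\<close>, plus one exactly
  when \<open>(s - m q) mod t < qhat t q\<close>, i.e. when \<open>m \<in> Hset s t q\<close>; accumulating these gaps gives
  \<open>Splus = Sbase + \<Sum>{m \<in> H. m < M}\<close>. The set \<open>H\<close> is periodic with period \<open>t\<close>, and as
  \<open>qhat t q\<close> is a unit modulo \<open>t\<close>, each period contains exactly \<open>qhat t q\<close> elements; the four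
  cases evaluate \<open>\<Sum>{m \<in> H. m < M}\<close> according to the position of \<open>M\<close> relative to the
  first period.\<close>

definition cdiv :: "int \<Rightarrow> int \<Rightarrow> int" where
  "cdiv a b = - ((- a) div b)"

lemma ceiling_divide_of_int_eq: "\<lceil>real_of_int a / real_of_int b\<rceil> = cdiv a b"
  unfolding ceiling_def cdiv_def
  by (metis floor_divide_of_int_eq minus_divide_left of_int_minus)

lemma cdiv_unique:
  assumes "0 < b" "(c - 1) * b < a" "a \<le> c * b"
  shows "cdiv a b = c"
proof -
  have "- a = b * (- c) + (c * b - a)" by (simp add: algebra_simps)
  moreover have "0 \<le> c * b - a" "c * b - a < b" using assms by (simp_all add: algebra_simps)
  ultimately show ?thesis unfolding cdiv_def by (metis int_div_pos_eq minus_minus)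
qed

lemma div_diff_less_divisor:
  fixes a r t :: int
  assumes "0 \<le> r" "r < t"
  shows "(a - r) div t = a div t - (if a mod t < r then 1 else 0)"
proof -
  have t: "0 < t" using assms by simp
  show ?thesis
  proof (cases "a mod t < r")
    case True
    have "a - r = t * (a div t - 1) + (a mod t - r + t)" by (simp add: algebra_simps)
    moreover have "0 \<le> a mod t - r + t" "a mod t - r + t < t"
      using True assms pos_mod_sign[OF t, of a] by linarith+
    ultimately have "(a - r) div t = a div t - 1" by (rule int_div_pos_eq)
    then show ?thesis using True by simp
  next
    case False
    have "a - r = t * (a div t) + (a mod t - r)" by (simp add: algebra_simps)
    moreover have "0 \<le> a mod t - r" "a mod t - r < t"
      using False assms pos_mod_bound[OF t, of a] by linarith+
    ultimately have "(a - r) div t = a div t" by (rule int_div_pos_eq)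
    then show ?thesis using False by simp
  qed
qed

lemma cdiv_add_less_divisor:
  assumes "0 \<le> r" "r < t"
  shows "cdiv (a + r) t = cdiv a t + (if (- a) mod t < r then 1 else 0)"
  using div_diff_less_divisor[OF assms, of "- a"] unfolding cdiv_def by simp

lemma cdiv_add_mult_self:
  assumes "0 < t"
  shows "cdiv (a + k * t) t = cdiv a t + k"
  using div_mult_self1[of t "- a" "- k"] assms unfolding cdiv_def by simp

lemma div_add_le_divisor_cases:
  fixes a t q :: int
  assumes "0 < t" "t \<le> q"
  obtains "(a + t) div q = a div q" | "(a + t) div q = a div q + 1"
proof -
  have "a div q \<le> (a + t) div q" using assms by (intro zdiv_mono1) auto
  moreover have "(a + t) div q \<le> (a + q) div q" using assms by (intro zdiv_mono1) auto
  moreover have "(a + q) div q = a div q + 1" using assms by simp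
  ultimately show ?thesis using that by linarith
qed

lemma Hset_iff_mod:
  assumes "0 < t"
  shows "m \<in> Hset s t q \<longleftrightarrow> 0 \<le> m \<and> (s - m * q) mod t < qhat t q"
proof -
  have "(s - m * q) mod t = (shat s t - m * qhat t q) mod t"
    unfolding shat_def qhat_def by (metis mod_diff_cong mod_mod_trivial mod_mult_right_eq)
  then show ?thesis unfolding Hset_def by simp
qed

lemma cdiv_threshold_step:
  assumes "0 < t" "0 \<le> m"
  shows "cdiv ((m + 1) * q - s) t = cdiv (m * q - s) t + qbar t q + (if m \<in> Hset s t q then 1 else 0)"
proof -
  have "(m + 1) * q - s = (m * q - s + qhat t q) + qbar t q * t"
    unfolding qbar_def qhat_def by (simp add: algebra_simps)
  then have "cdiv ((m + 1) * q - s) t = cdiv (m * q - s + qhat t q) t + qbar t q"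
    using assms(1) by (simp only: cdiv_add_mult_self)
  also have "\<dots> = cdiv (m * q - s) t + (if (s - m * q) mod t < qhat t q then 1 else 0) + qbar t q"
    using cdiv_add_less_divisor[of "qhat t q" t] assms(1) unfolding qhat_def by simp
  finally show ?thesis using Hset_iff_mod[OF assms(1)] assms(2) by simp
qed

lemma div_mult_bounds:
  fixes a q :: int
  assumes "0 < q"
  shows "q * (a div q) \<le> a" "a < q * (a div q) + q"
proof -
  have "a = q * (a div q) + a mod q" by simp
  then show "q * (a div q) \<le> a" "a < q * (a div q) + q"
    using pos_mod_sign[OF assms, of a] pos_mod_bound[OF assms, of a] by linarith+
qed

lemma triangular_step: "((m + 1) - 1) * (m + 1) div 2 = (m - 1) * m div 2 + (m :: int)"
proof -
  have "((m + 1) - 1) * (m + 1) = (m - 1) * m + m * 2" by (simp add: algebra_simps)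
  then show ?thesis by simp
qed

lemma sum_div_arith_progression:
  fixes s t q N :: int
  assumes "0 \<le> s" "s < q" "0 < t" "t \<le> q" "0 \<le> N"
  shows "(\<Sum>k\<in>{0..N}. (s + k * t) div q) =
    (let M = (s + N * t) div q in
      qbar t q * ((M - 1) * M div 2) + M * (N - cdiv (M * q - s) t + 1)
      + \<Sum>(Hset s t q \<inter> {0..M - 1}))"
  using assms(5)
proof (induction N rule: int_ge_induct)
  case base
  then show ?case using assms by simp
next
  case (step N)
  define M where "M = (s + N * t) div q"
  define H where "H = Hset s t q"
  have M_nonneg: "0 \<le> M"
    unfolding M_def using assms step.hyps by (simp add: pos_imp_zdiv_nonneg_iff)
  have "{0..N + 1} = insert (N + 1) {0..N}" using step.hyps by auto
  then have sum_Suc: "(\<Sum>k\<in>{0..N + 1}. (s + k * t) div q)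
      = (\<Sum>k\<in>{0..N}. (s + k * t) div q) + (s + (N + 1) * t) div q"
    by simp
  have "s + (N + 1) * t = (s + N * t) + t" by (simp add: algebra_simps)
  then consider "(s + (N + 1) * t) div q = M" | "(s + (N + 1) * t) div q = M + 1"
    using div_add_le_divisor_cases[OF assms(3,4)] unfolding M_def by metis
  then show ?case
  proof cases
    case 1
    then show ?thesis using step.IH unfolding sum_Suc Let_def M_def[symmetric]
      by (simp add: algebra_simps)
  next
    case 2
    have "s + N * t < q * (M + 1)" "q * (M + 1) \<le> s + (N + 1) * t"
      using div_mult_bounds[of q "s + N * t"] div_mult_bounds[of q "s + (N + 1) * t"] 2 assms
      unfolding M_def by (simp_all add: algebra_simps)
    then have next_threshold: "cdiv ((M + 1) * q - s) t = N + 1"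
      using assms by (intro cdiv_unique) (simp_all add: algebra_simps)
    then have threshold: "cdiv (M * q - s) t = N + 1 - qbar t q - (if M \<in> H then 1 else 0)"
      using cdiv_threshold_step[OF assms(3) M_nonneg, of q s] unfolding H_def by simp
    have "H \<inter> {0..M + 1 - 1} = (if M \<in> H then insert M (H \<inter> {0..M - 1}) else H \<inter> {0..M - 1})"
      using M_nonneg by (auto simp: order_le_less)
    then have "\<Sum>(H \<inter> {0..M + 1 - 1}) = \<Sum>(H \<inter> {0..M - 1}) + (if M \<in> H then M else 0)"
      by simp
    then show ?thesis using step.IH triangular_step[of M] threshold next_threshold
      unfolding sum_Suc Let_def M_def[symmetric] H_def[symmetric] 2
      by (simp add: algebra_simps)
  qed
qed

locale periodic_int_set =
  fixes H :: "int set" and t :: int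
  assumes period_pos: "0 < t"
    and nonneg: "H \<subseteq> {0..}"
    and periodic: "\<And>k. 0 \<le> k \<Longrightarrow> k + t \<in> H \<longleftrightarrow> k \<in> H"
begin

lemma periodic_mult:
  assumes "0 \<le> k" "0 \<le> a"
  shows "k + a * t \<in> H \<longleftrightarrow> k \<in> H"
  using assms(2)
proof (induction a rule: int_ge_induct)
  case (step a)
  have "k + (a + 1) * t = (k + a * t) + t" by (simp add: algebra_simps)
  moreover have "0 \<le> k + a * t" using step.hyps assms(1) period_pos by simp
  ultimately show ?case using step.IH periodic by (simp only:)
qed simp

lemma finite_first_period: "finite (H \<inter> {0..t - 1})"
  by simp

lemma inter_below_Min_empty:
  assumes "H \<inter> {0..t - 1} \<noteq> {}" "M \<le> Min (H \<inter> {0..t - 1})"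
  shows "H \<inter> {0..M - 1} = {}"
proof (rule ccontr)
  assume "H \<inter> {0..M - 1} \<noteq> {}"
  then obtain x where x: "x \<in> H" "0 \<le> x" "x < M" by auto
  have "Min (H \<inter> {0..t - 1}) \<le> t - 1" using Min_in[OF finite_first_period assms(1)] by auto
  then have "x \<in> H \<inter> {0..t - 1}" using x assms(2) by auto
  then show False using x assms(2) Min_le[OF finite_first_period] by fastforce
qed

lemma inter_eq_first_period:
  assumes "H \<inter> {0..t - 1} \<noteq> {}" "Max (H \<inter> {0..t - 1}) < M" "M \<le> Min (H \<inter> {0..t - 1}) + t"
  shows "H \<inter> {0..M - 1} = H \<inter> {0..t - 1}"
proof (intro equalityI subsetI)
  fix x assume x: "x \<in> H \<inter> {0..M - 1}"
  show "x \<in> H \<inter> {0..t - 1}"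
  proof (rule ccontr)
    assume "x \<notin> H \<inter> {0..t - 1}"
    then have "x - t \<in> H \<inter> {0..t - 1}"
      using x assms(3) periodic[of "x - t"] Min_in[OF finite_first_period assms(1)] by auto
    then have "Min (H \<inter> {0..t - 1}) \<le> x - t" by (rule Min_le[OF finite_first_period])
    then show False using x assms(3) by simp
  qed
next
  fix x assume x: "x \<in> H \<inter> {0..t - 1}"
  then have "x \<le> Max (H \<inter> {0..t - 1})" by (rule Max_ge[OF finite_first_period])
  then have "x < M" using assms(2) by linarith
  then show "x \<in> H \<inter> {0..M - 1}" using x by simp
qed

lemma inter_next_period:
  assumes "0 \<le> u"
  shows "H \<inter> {0..(u + 1) * t - 1} = (H \<inter> {0..u * t - 1}) \<union> (\<lambda>k. k + u * t) ` (H \<inter> {0..t - 1})"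
proof (intro equalityI subsetI)
  fix x assume x: "x \<in> H \<inter> {0..(u + 1) * t - 1}"
  show "x \<in> (H \<inter> {0..u * t - 1}) \<union> (\<lambda>k. k + u * t) ` (H \<inter> {0..t - 1})"
  proof (cases "x < u * t")
    case False
    then have "x - u * t \<in> H \<inter> {0..t - 1}"
      using x periodic_mult[of "x - u * t" u] assms by (auto simp: algebra_simps)
    then show ?thesis by (auto intro: rev_image_eqI)
  qed (use x in auto)
next
  fix x assume x: "x \<in> (H \<inter> {0..u * t - 1}) \<union> (\<lambda>k. k + u * t) ` (H \<inter> {0..t - 1})"
  show "x \<in> H \<inter> {0..(u + 1) * t - 1}"
  proof (cases "x \<in> H \<inter> {0..u * t - 1}")
    case False
    then obtain j where "j \<in> H \<inter> {0..t - 1}" "x = j + u * t" using x by auto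
    then show ?thesis using periodic_mult[of j u] assms period_pos by (auto simp: algebra_simps)
  qed (use assms period_pos in \<open>auto simp: algebra_simps\<close>)
qed

lemma sum_inter_periods:
  assumes "0 \<le> u"
  shows "\<Sum>(H \<inter> {0..u * t - 1})
    = u * \<Sum>(H \<inter> {0..t - 1}) + int (card (H \<inter> {0..t - 1})) * t * ((u - 1) * u div 2)"
  using assms
proof (induction u rule: int_ge_induct)
  case (step u)
  let ?J = "H \<inter> {0..t - 1}"
  have "(H \<inter> {0..u * t - 1}) \<inter> (\<lambda>k. k + u * t) ` ?J = {}" by auto
  then have "\<Sum>(H \<inter> {0..(u + 1) * t - 1}) = \<Sum>(H \<inter> {0..u * t - 1}) + (\<Sum>k\<in>?J. k + u * t)"
    unfolding inter_next_period[OF step.hyps] by (simp add: sum.union_disjoint sum.reindex)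
  also have "(\<Sum>k\<in>?J. k + u * t) = \<Sum>?J + int (card ?J) * (u * t)"
    by (simp add: sum.distrib)
  finally show ?case using step.IH triangular_step[of u] by (simp add: algebra_simps)
qed simp

lemma sum_inter_atLeastAtMost:
  assumes "1 \<le> M"
  defines "u \<equiv> (M - 1) div t"
  shows "\<Sum>(H \<inter> {0..M - 1}) = u * \<Sum>(H \<inter> {0..t - 1})
    + int (card (H \<inter> {0..t - 1})) * t * ((u - 1) * u div 2) + \<Sum>(H \<inter> {u * t..M - 1})"
proof -
  have "0 \<le> u" unfolding u_def using assms period_pos by (simp add: pos_imp_zdiv_nonneg_iff)
  moreover have "u * t \<le> M - 1"
    unfolding u_def using div_mult_bounds[OF period_pos, of "M - 1"] by (simp add: mult.commute)
  ultimately have "H \<inter> {0..M - 1} = (H \<inter> {0..u * t - 1}) \<union> (H \<inter> {u * t..M - 1})"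
    using period_pos nonneg by auto
  then have "\<Sum>(H \<inter> {0..M - 1}) = \<Sum>(H \<inter> {0..u * t - 1}) + \<Sum>(H \<inter> {u * t..M - 1})"
    by (simp only:) (rule sum.union_disjoint, auto)
  then show ?thesis using sum_inter_periods[OF \<open>0 \<le> u\<close>] by simp
qed

end

lemma card_affine_residues_below:
  fixes a b r t :: int
  assumes "0 < t" "coprime a t" "0 \<le> r" "r \<le> t"
  shows "card {k \<in> {0..t - 1}. (b - k * a) mod t < r} = nat r"
proof -
  define f where "f k = (b - k * a) mod t" for k
  have inj: "inj_on f {0..t - 1}"
  proof (rule inj_onI)
    fix x y assume xy: "x \<in> {0..t - 1}" "y \<in> {0..t - 1}" "f x = f y"
    then have "t dvd (y - x) * a" unfolding f_def by (simp add: mod_eq_dvd_iff algebra_simps)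
    then have "t dvd y - x" using assms(2) by (simp add: coprime_commute coprime_dvd_mult_left_iff)
    moreover have "\<bar>y - x\<bar> < t" using xy(1,2) by auto
    ultimately show "x = y" using dvd_imp_le_int[of "y - x" t] assms(1) by fastforce
  qed
  have onto: "f ` {0..t - 1} = {0..t - 1}"
    using assms(1) by (intro endo_inj_surj inj) (auto simp: f_def)
  have image: "f ` {k \<in> {0..t - 1}. f k < r} = {0..r - 1}"
  proof (intro equalityI subsetI)
    fix x assume "x \<in> {0..r - 1}"
    then have "x \<in> f ` {0..t - 1}" using onto assms(4) by auto
    with \<open>x \<in> {0..r - 1}\<close> show "x \<in> f ` {k \<in> {0..t - 1}. f k < r}" by auto
  qed (use assms(1) in \<open>auto simp: f_def\<close>)
  have "bij_betw f {0..t - 1} {0..t - 1}" using inj onto by (simp add: bij_betw_def)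
  then have "bij_betw f {k \<in> {0..t - 1}. f k < r} {0..r - 1}"
    by (rule bij_betw_subset) (use image in auto)
  then show ?thesis unfolding f_def by (simp add: bij_betw_same_card)
qed

lemma Hset_periodic:
  assumes "0 < t"
  shows "periodic_int_set (Hset s t q) t"
proof
  fix k :: int
  have "shat s t - (k + t) * qhat t q = (shat s t - k * qhat t q) + (- qhat t q) * t"
    by (simp add: algebra_simps)
  then have "(shat s t - (k + t) * qhat t q) mod t = (shat s t - k * qhat t q) mod t"
    by (simp only: mod_mult_self1)
  then show "k + t \<in> Hset s t q \<longleftrightarrow> k \<in> Hset s t q" if "0 \<le> k"
    using that assms unfolding Hset_def by simp
qed (use assms in \<open>auto simp: Hset_def\<close>)

lemma card_Jset:
  assumes "0 < t" "gcd t q = 1"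
  shows "int (card (Jset s t q)) = qhat t q"
proof -
  have "coprime (qhat t q) t"
    using assms by (simp add: qhat_def coprime_iff_gcd_eq_1 gcd.commute gcd_red_int[symmetric])
  moreover have "Jset s t q = {k \<in> {0..t - 1}. (shat s t - k * qhat t q) mod t < qhat t q}"
    unfolding Jset_def Hset_def by auto
  moreover have "0 \<le> qhat t q" "qhat t q \<le> t"
    unfolding qhat_def using assms(1) pos_mod_bound[of t q] by (simp_all add: order_less_imp_le)
  ultimately show ?thesis
    using card_affine_residues_below[of t "qhat t q" "qhat t q" "shat s t"] assms(1) by simp
qed

lemma of_int_triangular: "real_of_int ((m - 1) * m div 2) = real_of_int ((m - 1) * m) / 2"
proof -
  have "2 dvd (m - 1) * m" by auto
  then show ?thesis by (simp add: real_of_int_div)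
qed

lemma Splus_eq_Sbase_plus_sum:
  assumes "0 \<le> s" "s < q" "0 < t" "t \<le> q" "0 \<le> N"
  shows "real_of_int (Splus s t q N)
    = Sbase s t q N + real_of_int (\<Sum>(Hset s t q \<inter> {0..Mval s t q N - 1}))"
proof -
  have "Mval s t q N = (s + N * t) div q"
    unfolding Mval_def by (rule floor_divide_of_int_eq)
  moreover have "Splus s t q N = (\<Sum>k\<in>{0..N}. (s + k * t) div q)"
    unfolding Splus_def by (simp only: floor_divide_of_int_eq)
  moreover have "\<lceil>xM s t q N\<rceil> = cdiv (Mval s t q N * q - s) t"
    unfolding xM_def by (rule ceiling_divide_of_int_eq)
  ultimately show ?thesis
    using sum_div_arith_progression[OF assms] of_int_triangular
    unfolding Sbase_def Let_def by simp
qed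

theorem theorem9:
  fixes s t q N :: int
  assumes "0 \<le> s" "s < q" "1 \<le> t" "t < q" "0 \<le> N"
    and "\<not> t dvd q" and "gcd t q = 1"
  shows
   "(let M = Mval s t q N; H = Hset s t q; J = Jset s t q;
         j0 = Min J; jl = Max J; S = Sbase s t q N;
         Sp = real_of_int (Splus s t q N) in
     (j0 \<ge> M \<longrightarrow> Sp = S) \<and>
     (j0 < M \<and> M \<le> jl \<longrightarrow>
        Sp = S + real_of_int (\<Sum> (H \<inter> {0..M-1}))) \<and>
     (jl < M \<and> j0 + t \<ge> M \<longrightarrow>
        Sp = S + real_of_int (\<Sum> J)) \<and>
     (jl < M \<and> j0 + t < M \<longrightarrow>
        (let u = (M - 1) div t in
         Sp = S + real_of_int (u * \<Sum> J)
              + real_of_int (qhat t q * t) * (real_of_int ((u - 1) * u) / 2)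
              + real_of_int (\<Sum> (H \<inter> {u*t..M-1})))))"
proof -
  define M where "M = Mval s t q N"
  define H where "H = Hset s t q"
  have t: "0 < t" using assms(3) by simp
  interpret periodic_int_set H t unfolding H_def by (rule Hset_periodic[OF t])
  have J: "Jset s t q = H \<inter> {0..t - 1}" unfolding Jset_def H_def ..
  have "0 < qhat t q" using assms(6) t unfolding qhat_def
    by (metis dvd_eq_mod_eq_0 order_le_less pos_mod_sign)
  then have nonempty: "H \<inter> {0..t - 1} \<noteq> {}" using card_Jset[OF t assms(7), of s] J by auto
  have key: "real_of_int (Splus s t q N) = Sbase s t q N + real_of_int (\<Sum>(H \<inter> {0..M - 1}))"
    using Splus_eq_Sbase_plus_sum assms unfolding M_def H_def by simp
  show ?thesis
    unfolding Let_def J M_def[symmetric] H_def[symmetric]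
  proof (intro conjI impI)
    assume "M \<le> Min (H \<inter> {0..t - 1})"
    then show "real_of_int (Splus s t q N) = Sbase s t q N"
      using key inter_below_Min_empty[OF nonempty, of M] by simp
  next
    assume "Max (H \<inter> {0..t - 1}) < M \<and> M \<le> Min (H \<inter> {0..t - 1}) + t"
    then show "real_of_int (Splus s t q N) = Sbase s t q N + real_of_int (\<Sum>(H \<inter> {0..t - 1}))"
      using key inter_eq_first_period[OF nonempty, of M] by simp
  next
    assume "Max (H \<inter> {0..t - 1}) < M \<and> Min (H \<inter> {0..t - 1}) + t < M"
    moreover have "0 \<le> Max (H \<inter> {0..t - 1})" using Max_in[OF finite_first_period nonempty] by auto
    ultimately have "1 \<le> M" by simp
    then show "real_of_int (Splus s t q N) = Sbase s t q N
        + real_of_int ((M - 1) div t * \<Sum>(H \<inter> {0..t - 1}))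
        + real_of_int (qhat t q * t) * (real_of_int (((M - 1) div t - 1) * ((M - 1) div t)) / 2)
        + real_of_int (\<Sum>(H \<inter> {(M - 1) div t * t..M - 1}))"
      using key sum_inter_atLeastAtMost[of M] card_Jset[OF t assms(7), of s]
      unfolding J of_int_triangular[symmetric] by simp
  qed (use key in simp)
qed

end
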